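(* For every $k$-tree $T$ and every $k$-clique $C$ of $T$, $R(T;C)>\overline N(T;C)$.
   Context: A $k$-tree is defined recursively: $K_k$ is a $k$-tree, and if $T$ is a $k$-tree then so is the graph obtained by joining a new vertex to all vertices of some $k$-clique of $T$; there are no others. A sub-$k$-tree is a subgraph that is itself a $k$-tree. $R(T;C)$ is the sum of the numbers of vertices of all sub-$k$-trees of $T$ containing $C$, and $\overline N(T;C)$ is the number of sub-$k$-trees of $T$ not containing $C$. *)

theory Defs
  imports Main
begin

text \<open>Graphs are pairs (V, E) of a vertex set and a set of 2-element edge sets.\<close>

definition complete_edges :: "'a set \<Rightarrow> 'a set set" where
  "complete_edges V = {e. \<exists>u v. u \<in> V \<and> v \<in> V \<and> u \<noteq> v \<and> e = {u, v}}"

definition is_clique :: "'a set set \<Rightarrow> 'a set \<Rightarrow> bool" where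
  "is_clique E C \<longleftrightarrow> (\<forall>u\<in>C. \<forall>w\<in>C. u \<noteq> w \<longrightarrow> {u, w} \<in> E)"

definition is_kclique :: "nat \<Rightarrow> 'a set \<Rightarrow> 'a set set \<Rightarrow> 'a set \<Rightarrow> bool" where
  "is_kclique k V E C \<longleftrightarrow> C \<subseteq> V \<and> finite C \<and> card C = k \<and> is_clique E C"

inductive ktree :: "nat \<Rightarrow> 'a set \<Rightarrow> 'a set set \<Rightarrow> bool" for k where
  base: "finite V \<Longrightarrow> card V = k \<Longrightarrow> ktree k V (complete_edges V)"
| step: "ktree k V E \<Longrightarrow> is_kclique k V E C \<Longrightarrow> v \<notin> V \<Longrightarrow>
         ktree k (insert v V) (E \<union> {{v, c} | c. c \<in> C})"

definition sub_ktrees :: "nat \<Rightarrow> 'a set \<Rightarrow> 'a set set \<Rightarrow> ('a set \<times> 'a set set) set" where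
  "sub_ktrees k V E = {(V', E'). V' \<subseteq> V \<and> E' \<subseteq> E \<and> ktree k V' E'}"

definition R_sum :: "nat \<Rightarrow> 'a set \<Rightarrow> 'a set set \<Rightarrow> 'a set \<Rightarrow> nat" where
  "R_sum k V E C = (\<Sum>S \<in> {S \<in> sub_ktrees k V E. is_kclique k (fst S) (snd S) C}. card (fst S))"

definition N_bar :: "nat \<Rightarrow> 'a set \<Rightarrow> 'a set set \<Rightarrow> 'a set \<Rightarrow> nat" where
  "N_bar k V E C = card {S \<in> sub_ktrees k V E. \<not> is_kclique k (fst S) (snd S) C}"

end

theory Submission
  imports Defs
begin

text \<open>Write \<open>N(Ds)\<close> for the number of sub-k-trees of \<open>T\<close> containing every clique of the
  family \<open>Ds\<close> and \<open>R(Ds)\<close> for the sum of their orders. We show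
  \<open>N(Ds) + k \<le> N(Ds \<union> {C}) + R(Ds \<union> {C})\<close> whenever \<open>T\<close> contains \<open>Ds\<close> and \<open>C\<close>; for
  \<open>Ds = {}\<close> this is \<open>N_bar(T;C) + k \<le> R(T;C)\<close>.
  When a vertex \<open>w\<close> is attached to a k-clique \<open>Q\<close>, a sub-k-tree of the new tree either avoids
  \<open>w\<close>, or is one of at most \<open>k\<close> cliques \<open>K\<^sub>k\<close> through \<open>w\<close>, or is obtained by attaching \<open>w\<close>
  to a sub-k-tree of the old tree that contains \<open>Q\<close>: there \<open>w\<close> has degree at most \<open>k\<close>, so it
  was attached last. This expresses \<open>N\<close> and \<open>R\<close> of the new tree through those of the old
  one, for the family \<open>Ds\<close> and for the family of \<open>Q\<close> and the cliques of \<open>Ds\<close> avoiding \<open>w\<close>,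
  and the induction hypothesis covers both.\<close>

section \<open>Edge sets\<close>

abbreviation join_edges :: "'a \<Rightarrow> 'a set \<Rightarrow> 'a set set" where
  "join_edges v C \<equiv> {{v, c} | c. c \<in> C}"

definition nbhd :: "'a set set \<Rightarrow> 'a \<Rightarrow> 'a set" where
  "nbhd E v = {u. {v, u} \<in> E}"

definition delete_vertex :: "'a set set \<Rightarrow> 'a \<Rightarrow> 'a set set" where
  "delete_vertex E v = {e \<in> E. v \<notin> e}"

lemma complete_edges_insert:
  "w \<notin> V \<Longrightarrow> complete_edges (insert w V) = complete_edges V \<union> join_edges w V"
  unfolding complete_edges_def by (auto simp: insert_commute)

lemma nbhd_complete_edges: "nbhd (complete_edges A) v = A - {v}" if "v \<in> A"
  using that unfolding nbhd_def complete_edges_def by (auto simp: doubleton_eq_iff)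

lemma delete_vertex_complete_edges: "delete_vertex (complete_edges A) v = complete_edges (A - {v})"
  unfolding delete_vertex_def complete_edges_def by auto

lemma is_clique_iff_complete_edges_subset: "is_clique E C \<longleftrightarrow> complete_edges C \<subseteq> E"
  unfolding is_clique_def complete_edges_def by auto

lemma is_kclique_complete_edges: "finite A \<Longrightarrow> card A = k \<Longrightarrow> is_kclique k A (complete_edges A) A"
  unfolding is_kclique_def is_clique_iff_complete_edges_subset by simp

lemma is_kclique_mono: "is_kclique k A E D \<Longrightarrow> A \<subseteq> A' \<Longrightarrow> E \<subseteq> E' \<Longrightarrow> is_kclique k A' E' D"
  unfolding is_kclique_def is_clique_def by blast

lemma is_clique_join_edges:
  "is_clique E Q \<Longrightarrow> D \<subseteq> insert w Q \<Longrightarrow> is_clique (E \<union> join_edges w Q) D"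
  unfolding is_clique_def by (auto simp: insert_commute) blast

lemma is_kclique_join_edges_avoiding:
  "is_kclique k (insert w A) (E \<union> join_edges w Q) D \<Longrightarrow> w \<notin> D \<Longrightarrow> is_kclique k A E D"
  unfolding is_kclique_def is_clique_def by (auto simp: doubleton_eq_iff)

lemma is_kclique_delete_vertex:
  "is_kclique k A E D \<Longrightarrow> v \<notin> D \<Longrightarrow> is_kclique k (A - {v}) (delete_vertex E v) D"
  unfolding is_kclique_def is_clique_def delete_vertex_def by auto

lemma nbhd_join_edges_self:
  "(\<forall>e\<in>E. w \<notin> e) \<Longrightarrow> w \<notin> Q \<Longrightarrow> nbhd (E \<union> join_edges w Q) w = Q"
  unfolding nbhd_def by (auto simp: doubleton_eq_iff)

lemma nbhd_join_edges_other:
  "v \<noteq> w \<Longrightarrow> v \<notin> Q \<Longrightarrow> nbhd (E \<union> join_edges w Q) v = nbhd E v"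
  unfolding nbhd_def by (auto simp: doubleton_eq_iff)

lemma delete_vertex_join_edges_self:
  "(\<forall>e\<in>E. w \<notin> e) \<Longrightarrow> delete_vertex (E \<union> join_edges w Q) w = E"
  unfolding delete_vertex_def by auto

lemma delete_vertex_join_edges_other:
  "v \<noteq> w \<Longrightarrow> v \<notin> Q \<Longrightarrow>
    delete_vertex (E \<union> join_edges w Q) v = delete_vertex E v \<union> join_edges w Q"
  unfolding delete_vertex_def by auto

lemma delete_vertex_join_nbhd:
  "E \<subseteq> complete_edges A \<Longrightarrow> delete_vertex E v \<union> join_edges v (nbhd E v) = E"
  unfolding delete_vertex_def nbhd_def complete_edges_def by (auto simp: insert_commute)

section \<open>k-trees\<close>

lemma ktree_finite: "ktree k V E \<Longrightarrow> finite V"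
  by (induction rule: ktree.induct) auto

lemma ktree_card_ge: "ktree k V E \<Longrightarrow> k \<le> card V"
  by (induction rule: ktree.induct) (auto dest: ktree_finite)

lemma ktree_edges_subset: "ktree k V E \<Longrightarrow> E \<subseteq> complete_edges V"
proof (induction rule: ktree.induct)
  case (step V E C v)
  have "C \<subseteq> V" using step.hyps(2) unfolding is_kclique_def by simp
  then show ?case using step.IH unfolding complete_edges_insert[OF step.hyps(3)] by blast
qed simp

lemma ktree_edge_subset:
  assumes "ktree k V E" "e \<in> E" shows "e \<subseteq> V"
  using subsetD[OF ktree_edges_subset[OF assms(1)] assms(2)] unfolding complete_edges_def by auto

lemma ktree_nbhd_subset: "ktree k V E \<Longrightarrow> nbhd E v \<subseteq> V"
  unfolding nbhd_def by (auto dest: ktree_edge_subset)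

lemma ktree_finite_nbhd: "ktree k V E \<Longrightarrow> finite (nbhd E v)"
  by (rule finite_subset[OF ktree_nbhd_subset ktree_finite])

lemma ktree_card_eq_complete: "ktree k V E \<Longrightarrow> card V = k \<Longrightarrow> E = complete_edges V"
proof (induction rule: ktree.induct)
  case (step V E C v)
  then show ?case using ktree_card_ge[OF step.hyps(1)] ktree_finite[OF step.hyps(1)] by simp
qed simp

lemma ktree_card_Suc_complete:
  "ktree k V E \<Longrightarrow> card V = Suc k \<Longrightarrow> E = complete_edges V"
proof (induction rule: ktree.induct)
  case (step V E C v)
  have "finite V" using ktree_finite[OF step.hyps(1)] .
  then have card_V: "card V = k" using step by simp
  then have "C = V" using step.hyps(2) \<open>finite V\<close> unfolding is_kclique_def
    by (intro card_subset_eq) auto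
  then show ?case
    using ktree_card_eq_complete[OF step.hyps(1) card_V] complete_edges_insert[OF step.hyps(3)]
    by simp
qed simp

lemma ktree_degree_ge:
  "ktree k V E \<Longrightarrow> v \<in> V \<Longrightarrow> k < card V \<Longrightarrow> k \<le> card (nbhd E v)"
proof (induction arbitrary: v rule: ktree.induct)
  case (step V E C w)
  let ?E' = "E \<union> join_edges w C"
  have T': "ktree k (insert w V) ?E'" using ktree.step[OF step.hyps] .
  have fin: "finite (nbhd ?E' v)" by (rule ktree_finite_nbhd[OF T'])
  consider "v = w" | "v \<noteq> w" "k < card V" | "v \<noteq> w" "card V = k"
    using ktree_card_ge[OF step.hyps(1)] by linarith
  then show ?case
  proof cases
    case 1
    then have "C \<subseteq> nbhd ?E' v" unfolding nbhd_def by auto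
    then have "card C \<le> card (nbhd ?E' v)" by (rule card_mono[OF fin])
    then show ?thesis using step.hyps(2) unfolding is_kclique_def by simp
  next
    case 2
    have "nbhd E v \<subseteq> nbhd ?E' v" unfolding nbhd_def by auto
    then have "card (nbhd E v) \<le> card (nbhd ?E' v)" by (rule card_mono[OF fin])
    moreover have "k \<le> card (nbhd E v)" using step.IH[OF _ 2(2)] 2(1) step.prems(1) by simp
    ultimately show ?thesis by simp
  next
    case 3
    have "finite V" by (rule ktree_finite[OF step.hyps(1)])
    then have card_V': "card (insert w V) = Suc k" using 3 step.hyps(3) by simp
    have "nbhd ?E' v = insert w V - {v}"
      using ktree_card_Suc_complete[OF T' card_V'] nbhd_complete_edges[OF step.prems(1)] by simp
    then show ?thesis using card_V' \<open>finite V\<close> step.prems(1) by simp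
  qed
qed simp

lemma ktree_delete_vertex:
  "ktree k V E \<Longrightarrow> v \<in> V \<Longrightarrow> k < card V \<Longrightarrow> card (nbhd E v) \<le> k \<Longrightarrow>
    ktree k (V - {v}) (delete_vertex E v) \<and> is_kclique k (V - {v}) (delete_vertex E v) (nbhd E v)"
proof (induction arbitrary: v rule: ktree.induct)
  case (step V E C w)
  let ?E' = "E \<union> join_edges w C"
  have T': "ktree k (insert w V) ?E'" using ktree.step[OF step.hyps] .
  have avoid_w: "\<forall>e\<in>E. w \<notin> e" using ktree_edge_subset[OF step.hyps(1)] step.hyps(3) by blast
  have w_C: "w \<notin> C" using step.hyps(2,3) unfolding is_kclique_def by blast
  consider "v = w" | "v \<noteq> w" "k < card V" | "v \<noteq> w" "card V = k"
    using ktree_card_ge[OF step.hyps(1)] by linarith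
  then show ?case
  proof cases
    case 1
    have "insert w V - {w} = V" using step.hyps(3) by simp
    then show ?thesis
      using 1 step.hyps(1,2) nbhd_join_edges_self[OF avoid_w w_C]
        delete_vertex_join_edges_self[OF avoid_w] by simp
  next
    case 2
    have v_V: "v \<in> V" using 2 step.prems(1) by simp
    have v_C: "v \<notin> C"
    proof
      assume "v \<in> C"
      then have "insert w (nbhd E v) \<subseteq> nbhd ?E' v" unfolding nbhd_def by auto
      then have "card (insert w (nbhd E v)) \<le> card (nbhd ?E' v)"
        by (rule card_mono[OF ktree_finite_nbhd[OF T']])
      moreover have "w \<notin> nbhd E v" using ktree_nbhd_subset[OF step.hyps(1)] step.hyps(3) by blast
      ultimately have "Suc (card (nbhd E v)) \<le> card (nbhd ?E' v)"
        using ktree_finite_nbhd[OF step.hyps(1)] by simp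
      then show False using ktree_degree_ge[OF step.hyps(1) v_V 2(2)] step.prems(3) by simp
    qed
    have nbhd_v: "nbhd ?E' v = nbhd E v" by (rule nbhd_join_edges_other[OF 2(1) v_C])
    have IH: "ktree k (V - {v}) (delete_vertex E v)"
      "is_kclique k (V - {v}) (delete_vertex E v) (nbhd E v)"
      using step.IH[OF v_V 2(2)] step.prems(3) nbhd_v by auto
    have "w \<notin> V - {v}" using step.hyps(3) by blast
    from ktree.step[OF IH(1) is_kclique_delete_vertex[OF step.hyps(2) v_C] this]
    have "ktree k (insert w V - {v}) (delete_vertex ?E' v)"
      using 2(1) delete_vertex_join_edges_other[OF 2(1) v_C] by (simp add: insert_Diff_if)
    moreover have "is_kclique k (insert w V - {v}) (delete_vertex ?E' v) (nbhd ?E' v)"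
      unfolding nbhd_v delete_vertex_join_edges_other[OF 2(1) v_C]
      by (rule is_kclique_mono[OF IH(2)]) auto
    ultimately show ?thesis by simp
  next
    case 3
    have "finite V" by (rule ktree_finite[OF step.hyps(1)])
    then have card_V': "card (insert w V) = Suc k" using 3 step.hyps(3) by simp
    let ?W = "insert w V - {v}"
    have W: "finite ?W" "card ?W = k" using \<open>finite V\<close> card_V' step.prems(1) by auto
    have "delete_vertex ?E' v = complete_edges ?W" "nbhd ?E' v = ?W"
      using ktree_card_Suc_complete[OF T' card_V'] delete_vertex_complete_edges
        nbhd_complete_edges[OF step.prems(1)] by simp_all
    then show ?thesis using ktree.base[OF W] is_kclique_complete_edges[OF W] by simp
  qed
qed simp

lemma finite_sub_ktrees:
  assumes "ktree k V E" shows "finite (sub_ktrees k V E)"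
proof -
  have "finite V" by (rule ktree_finite[OF assms])
  moreover have "E \<subseteq> Pow V" using ktree_edge_subset[OF assms] by blast
  ultimately have "finite (Pow V \<times> Pow E)" by (simp add: finite_subset)
  moreover have "sub_ktrees k V E \<subseteq> Pow V \<times> Pow E" unfolding sub_ktrees_def by auto
  ultimately show ?thesis by (rule finite_subset[rotated])
qed

lemma sub_ktrees_complete:
  assumes "finite V" "card V = k"
  shows "sub_ktrees k V (complete_edges V) = {(V, complete_edges V)}"
proof -
  have "A = V \<and> B = complete_edges V" if "A \<subseteq> V" "ktree k A B" for A B
  proof
    show "A = V" using that assms ktree_card_ge[OF that(2)] by (intro card_seteq) auto
    then show "B = complete_edges V" using ktree_card_eq_complete[OF that(2)] assms by simp
  qed
  then show ?thesis using ktree.base[OF assms] unfolding sub_ktrees_def by auto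
qed

section \<open>Sub-k-trees containing a family of cliques\<close>

definition sub_ktrees_containing ::
    "nat \<Rightarrow> 'a set \<Rightarrow> 'a set set \<Rightarrow> 'a set set \<Rightarrow> ('a set \<times> 'a set set) set" where
  "sub_ktrees_containing k V E Ds =
    {S \<in> sub_ktrees k V E. \<forall>D\<in>Ds. is_kclique k (fst S) (snd S) D}"

definition N_containing :: "nat \<Rightarrow> 'a set \<Rightarrow> 'a set set \<Rightarrow> 'a set set \<Rightarrow> nat" where
  "N_containing k V E Ds = card (sub_ktrees_containing k V E Ds)"

definition R_containing :: "nat \<Rightarrow> 'a set \<Rightarrow> 'a set set \<Rightarrow> 'a set set \<Rightarrow> nat" where
  "R_containing k V E Ds = (\<Sum>S \<in> sub_ktrees_containing k V E Ds. card (fst S))"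

lemma finite_sub_ktrees_containing: "ktree k V E \<Longrightarrow> finite (sub_ktrees_containing k V E Ds)"
  unfolding sub_ktrees_containing_def by (simp add: finite_sub_ktrees)

lemma self_mem_sub_ktrees_containing:
  "ktree k V E \<Longrightarrow> \<forall>D\<in>Ds. is_kclique k V E D \<Longrightarrow> (V, E) \<in> sub_ktrees_containing k V E Ds"
  unfolding sub_ktrees_containing_def sub_ktrees_def by auto

lemma N_containing_pos:
  assumes "ktree k V E" "\<forall>D\<in>Ds. is_kclique k V E D"
  shows "0 < N_containing k V E Ds"
  unfolding N_containing_def card_gt_0_iff
  using self_mem_sub_ktrees_containing[OF assms] finite_sub_ktrees_containing[OF assms(1)] by blast

lemma R_containing_ge:
  assumes "ktree k V E" "\<forall>D\<in>Ds. is_kclique k V E D"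
  shows "card V \<le> R_containing k V E Ds"
  unfolding R_containing_def
  using member_le_sum[OF self_mem_sub_ktrees_containing[OF assms] _
      finite_sub_ktrees_containing[OF assms(1)], of "\<lambda>S. card (fst S)"]
  by simp

lemma sub_ktrees_containing_complete:
  "finite V \<Longrightarrow> card V = k \<Longrightarrow> \<forall>D\<in>Ds. is_kclique k V (complete_edges V) D \<Longrightarrow>
    sub_ktrees_containing k V (complete_edges V) Ds = {(V, complete_edges V)}"
  unfolding sub_ktrees_containing_def by (auto simp: sub_ktrees_complete)

section \<open>Attaching a vertex\<close>

locale ktree_extension =
  fixes k :: nat and V :: "'a set" and E :: "'a set set" and Q :: "'a set" and w :: 'a
  assumes T: "ktree k V E" and Q_clique: "is_kclique k V E Q" and w_fresh: "w \<notin> V"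
begin

abbreviation "V' \<equiv> insert w V"
abbreviation "E' \<equiv> E \<union> join_edges w Q"

abbreviation "N \<equiv> N_containing k V E"
abbreviation "R \<equiv> R_containing k V E"
abbreviation "N' \<equiv> N_containing k V' E'"
abbreviation "R' \<equiv> R_containing k V' E'"

lemma ktree': "ktree k V' E'"
  by (rule ktree.step[OF T Q_clique w_fresh])

lemma Q_subset: "Q \<subseteq> V" and finite_Q: "finite Q" and card_Q: "card Q = k"
  using Q_clique unfolding is_kclique_def by auto

lemma new_notin_Q: "w \<notin> Q"
  using Q_subset w_fresh by blast

lemma edges_avoid_new: "\<forall>e\<in>E. w \<notin> e"
  using ktree_edge_subset[OF T] w_fresh by blast

lemma nbhd_new: "nbhd E' w = Q"
  by (rule nbhd_join_edges_self[OF edges_avoid_new new_notin_Q])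

lemma kclique_through_new_subset:
  assumes "is_kclique k V' E' D" "w \<in> D"
  shows "D \<subseteq> insert w Q"
proof
  fix u assume "u \<in> D"
  show "u \<in> insert w Q"
  proof (cases "u = w")
    case False
    have "is_clique E' D" using assms(1) unfolding is_kclique_def by simp
    then have "{w, u} \<in> E'" using assms(2) \<open>u \<in> D\<close> False unfolding is_clique_def by simp
    then have "u \<in> nbhd E' w" unfolding nbhd_def by (simp only: mem_Collect_eq)
    then show ?thesis using nbhd_new by simp
  qed simp
qed

lemma kclique_avoiding_new: "is_kclique k V' E' D \<Longrightarrow> w \<notin> D \<Longrightarrow> is_kclique k V E D"
  by (rule is_kclique_join_edges_avoiding)

definition extend :: "'a set \<times> 'a set set \<Rightarrow> 'a set \<times> 'a set set" where
  "extend S = (insert w (fst S), snd S \<union> join_edges w Q)"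

definition new_kcliques :: "'a set set \<Rightarrow> ('a set \<times> 'a set set) set" where
  "new_kcliques Ds = {S \<in> sub_ktrees_containing k V' E' Ds. w \<in> fst S \<and> card (fst S) = k}"

text \<open>The cliques that a sub-k-tree of \<open>T\<close> must contain for its extension by \<open>w\<close>
  to contain all of \<open>Ds\<close>.\<close>

definition trace :: "'a set set \<Rightarrow> 'a set set" where
  "trace Ds = insert Q {D \<in> Ds. w \<notin> D}"

lemma new_notin_old_sub_ktree: "S \<in> sub_ktrees_containing k V E Ds \<Longrightarrow> w \<notin> fst S"
  using w_fresh unfolding sub_ktrees_containing_def sub_ktrees_def by auto

lemma sub_ktrees_containing_through_new:
  "D \<in> Ds \<Longrightarrow> w \<in> D \<Longrightarrow> sub_ktrees_containing k V E Ds = {}"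
  using new_notin_old_sub_ktree unfolding sub_ktrees_containing_def is_kclique_def by blast

lemma extend_mem_sub_ktrees_containing:
  assumes Ds: "\<forall>D\<in>Ds. is_kclique k V' E' D"
    and S: "S \<in> sub_ktrees_containing k V E (trace Ds)"
  shows "extend S \<in> sub_ktrees_containing k V' E' Ds"
proof -
  obtain A B where AB: "S = (A, B)" by (cases S)
  have A: "A \<subseteq> V" "B \<subseteq> E" "ktree k A B" and cliques: "\<forall>D\<in>trace Ds. is_kclique k A B D"
    using S unfolding AB sub_ktrees_containing_def sub_ktrees_def by auto
  have Q_AB: "is_kclique k A B Q" using cliques unfolding trace_def by simp
  have "w \<notin> A" using A(1) w_fresh by blast
  have "is_kclique k (insert w A) (B \<union> join_edges w Q) D" if "D \<in> Ds" for D
  proof (cases "w \<in> D")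
    case True
    have D: "D \<subseteq> insert w Q" by (rule kclique_through_new_subset[OF Ds[rule_format, OF that] True])
    have "is_clique B Q" "Q \<subseteq> A" using Q_AB unfolding is_kclique_def by auto
    then have "is_clique (B \<union> join_edges w Q) D" "D \<subseteq> insert w A"
      using is_clique_join_edges[OF _ D] D by auto
    then show ?thesis using Ds that unfolding is_kclique_def by simp
  next
    case False
    then have "is_kclique k A B D" using cliques that unfolding trace_def by simp
    then show ?thesis by (rule is_kclique_mono) auto
  qed
  moreover have "insert w A \<subseteq> V'" "B \<union> join_edges w Q \<subseteq> E'" using A(1,2) by blast+
  ultimately show ?thesis
    using ktree.step[OF A(3) Q_AB \<open>w \<notin> A\<close>]
    unfolding AB extend_def sub_ktrees_containing_def sub_ktrees_def by simp
qed

lemma mem_old_sub_ktrees_containing: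
  assumes S: "S \<in> sub_ktrees_containing k V' E' Ds" and w: "w \<notin> fst S"
  shows "S \<in> sub_ktrees_containing k V E Ds"
proof -
  have S_ktree: "ktree k (fst S) (snd S)" and sub: "fst S \<subseteq> V'" "snd S \<subseteq> E'"
    using S unfolding sub_ktrees_containing_def sub_ktrees_def by auto
  have "snd S \<subseteq> E" using sub(2) ktree_edge_subset[OF S_ktree] w by blast
  then show ?thesis using S sub(1) w unfolding sub_ktrees_containing_def sub_ktrees_def by auto
qed

text \<open>The new vertex has degree at most \<open>k\<close> in a sub-k-tree of the extended tree, so it can be deleted;
  its neighbourhood is then a k-clique inside \<open>Q\<close>, hence all of \<open>Q\<close>.\<close>

lemma mem_extend_image:
  assumes S: "S \<in> sub_ktrees_containing k V' E' Ds" and w: "w \<in> fst S" "k < card (fst S)"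
  shows "S \<in> extend ` sub_ktrees_containing k V E (trace Ds)"
proof -
  obtain A B where AB: "S = (A, B)" by (cases S)
  have A: "A \<subseteq> V'" "B \<subseteq> E'" "ktree k A B" and cliques: "\<forall>D\<in>Ds. is_kclique k A B D"
    using S unfolding AB sub_ktrees_containing_def sub_ktrees_def by auto
  have "nbhd B w \<subseteq> nbhd E' w" using A(2) unfolding nbhd_def by blast
  then have nbhd_sub: "nbhd B w \<subseteq> Q" using nbhd_new by simp
  then have "card (nbhd B w) \<le> k" using card_mono[OF finite_Q] card_Q by simp
  then have T0: "ktree k (A - {w}) (delete_vertex B w)"
    and nbhd_clique: "is_kclique k (A - {w}) (delete_vertex B w) (nbhd B w)"
    using ktree_delete_vertex[OF A(3)] w unfolding AB by auto
  have nbhd_B: "nbhd B w = Q"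
    by (rule card_subset_eq[OF finite_Q nbhd_sub]) (use nbhd_clique card_Q in \<open>simp add: is_kclique_def\<close>)
  have "\<forall>D\<in>trace Ds. is_kclique k (A - {w}) (delete_vertex B w) D"
  proof
    fix D assume "D \<in> trace Ds"
    then consider "D = Q" | "D \<in> Ds" "w \<notin> D" unfolding trace_def by blast
    then show "is_kclique k (A - {w}) (delete_vertex B w) D"
    proof cases
      case 1
      then show ?thesis using nbhd_clique nbhd_B by simp
    next
      case 2
      show ?thesis using is_kclique_delete_vertex[OF cliques[rule_format, OF 2(1)] 2(2)] .
    qed
  qed
  moreover have "A - {w} \<subseteq> V" "delete_vertex B w \<subseteq> E"
    using A(1,2) unfolding delete_vertex_def by auto
  ultimately have mem: "(A - {w}, delete_vertex B w) \<in> sub_ktrees_containing k V E (trace Ds)"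
    using T0 unfolding sub_ktrees_containing_def sub_ktrees_def by simp
  have "insert w (A - {w}) = A" using w(1) AB by auto
  moreover have "delete_vertex B w \<union> join_edges w Q = B"
    using delete_vertex_join_nbhd[OF ktree_edges_subset[OF A(3)], of w] unfolding nbhd_B .
  ultimately have "S = extend (A - {w}, delete_vertex B w)" unfolding AB extend_def by simp
  then show ?thesis using mem by (rule image_eqI)
qed

lemma sub_ktrees_containing_extension:
  assumes "\<forall>D\<in>Ds. is_kclique k V' E' D"
  shows "sub_ktrees_containing k V' E' Ds =
    sub_ktrees_containing k V E Ds \<union> new_kcliques Ds \<union> extend ` sub_ktrees_containing k V E (trace Ds)"
    (is "_ = ?old \<union> ?new \<union> ?ext")
proof
  show "sub_ktrees_containing k V' E' Ds \<subseteq> ?old \<union> ?new \<union> ?ext"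
  proof
    fix S assume S: "S \<in> sub_ktrees_containing k V' E' Ds"
    then have "k \<le> card (fst S)"
      using ktree_card_ge unfolding sub_ktrees_containing_def sub_ktrees_def by auto
    then consider "w \<notin> fst S" | "w \<in> fst S" "card (fst S) = k" | "w \<in> fst S" "k < card (fst S)"
      by linarith
    then show "S \<in> ?old \<union> ?new \<union> ?ext"
    proof cases
      case 1
      then show ?thesis using mem_old_sub_ktrees_containing[OF S] by blast
    next
      case 2
      then have "S \<in> ?new" using S unfolding new_kcliques_def by simp
      then show ?thesis by blast
    next
      case 3
      then show ?thesis using mem_extend_image[OF S] by blast
    qed
  qed
  have "?old \<subseteq> sub_ktrees_containing k V' E' Ds"
    unfolding sub_ktrees_containing_def sub_ktrees_def by auto
  moreover have "?new \<subseteq> sub_ktrees_containing k V' E' Ds"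
    unfolding new_kcliques_def by blast
  moreover have "?ext \<subseteq> sub_ktrees_containing k V' E' Ds"
    using extend_mem_sub_ktrees_containing[OF assms] by blast
  ultimately show "?old \<union> ?new \<union> ?ext \<subseteq> sub_ktrees_containing k V' E' Ds"
    by (intro Un_least)
qed

lemma card_fst_extend:
  "S \<in> sub_ktrees_containing k V E Ds \<Longrightarrow> card (fst (extend S)) = Suc (card (fst S))"
  using new_notin_old_sub_ktree[of S Ds] finite_subset[OF _ ktree_finite[OF T]]
  unfolding extend_def sub_ktrees_containing_def sub_ktrees_def by auto

lemma delete_new_extend:
  assumes "S \<in> sub_ktrees_containing k V E Ds"
  shows "(fst (extend S) - {w}, delete_vertex (snd (extend S)) w) = S"
proof -
  have "snd S \<subseteq> E" using assms unfolding sub_ktrees_containing_def sub_ktrees_def by auto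
  then show ?thesis
    using new_notin_old_sub_ktree[OF assms] edges_avoid_new
    unfolding extend_def delete_vertex_def by (auto simp: prod_eq_iff)
qed

lemma inj_on_extend: "inj_on extend (sub_ktrees_containing k V E Ds)"
  by (rule inj_on_inverseI[where g = "\<lambda>S. (fst S - {w}, delete_vertex (snd S) w)"])
    (rule delete_new_extend)

lemma finite_new_kcliques: "finite (new_kcliques Ds)"
  using finite_sub_ktrees_containing[OF ktree'] unfolding new_kcliques_def by simp

lemma extension_parts_disjoint:
  "sub_ktrees_containing k V E Ds \<inter> new_kcliques Ds = {}"
  "(sub_ktrees_containing k V E Ds \<union> new_kcliques Ds) \<inter> extend ` sub_ktrees_containing k V E Ds' = {}"
proof -
  show "sub_ktrees_containing k V E Ds \<inter> new_kcliques Ds = {}"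
    using new_notin_old_sub_ktree unfolding new_kcliques_def by blast
  have "extend S \<notin> sub_ktrees_containing k V E Ds" for S
    using new_notin_old_sub_ktree[of "extend S"] unfolding extend_def by auto
  moreover have "extend S \<notin> new_kcliques Ds" if "S \<in> sub_ktrees_containing k V E Ds'" for S
    using card_fst_extend[OF that] ktree_card_ge[of k "fst S" "snd S"] that
    unfolding new_kcliques_def sub_ktrees_containing_def sub_ktrees_def by auto
  ultimately show "(sub_ktrees_containing k V E Ds \<union> new_kcliques Ds) \<inter>
      extend ` sub_ktrees_containing k V E Ds' = {}"
    by blast
qed

lemma N_containing_extension:
  assumes "\<forall>D\<in>Ds. is_kclique k V' E' D"
  shows "N' Ds = N Ds + card (new_kcliques Ds) + N (trace Ds)"
proof -
  have fin: "finite (sub_ktrees_containing k V E X)" for X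
    by (rule finite_sub_ktrees_containing[OF T])
  show ?thesis
    unfolding N_containing_def sub_ktrees_containing_extension[OF assms]
    using extension_parts_disjoint fin finite_new_kcliques
    by (simp add: card_Un_disjoint card_image[OF inj_on_extend])
qed

lemma R_containing_extension:
  assumes "\<forall>D\<in>Ds. is_kclique k V' E' D"
  shows "R' Ds = R Ds + k * card (new_kcliques Ds) + R (trace Ds) + N (trace Ds)"
proof -
  have fin: "finite (sub_ktrees_containing k V E X)" for X
    by (rule finite_sub_ktrees_containing[OF T])
  have new: "(\<Sum>S\<in>new_kcliques Ds. card (fst S)) = k * card (new_kcliques Ds)"
    unfolding new_kcliques_def by simp
  have ext: "(\<Sum>S\<in>extend ` sub_ktrees_containing k V E (trace Ds). card (fst S)) =
      R (trace Ds) + N (trace Ds)"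
    unfolding R_containing_def N_containing_def sum.reindex[OF inj_on_extend]
    by (simp add: card_fst_extend sum_Suc)
  show ?thesis
    unfolding R_containing_def sub_ktrees_containing_extension[OF assms]
    using extension_parts_disjoint fin finite_new_kcliques new ext
    by (simp add: sum.union_disjoint R_containing_def)
qed

lemma trace_kcliques: "\<forall>D\<in>Ds. is_kclique k V' E' D \<Longrightarrow> \<forall>D\<in>trace Ds. is_kclique k V E D"
  using Q_clique kclique_avoiding_new unfolding trace_def by blast

lemma new_kclique_props:
  assumes "S \<in> new_kcliques Ds"
  shows "snd S = complete_edges (fst S)" "finite (fst S)" "card (fst S) = k" "w \<in> fst S"
    "fst S \<subseteq> insert w Q"
proof -
  have S_ktree: "ktree k (fst S) (snd S)" and sub: "fst S \<subseteq> V'" "snd S \<subseteq> E'"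
    and card: "card (fst S) = k" and w: "w \<in> fst S"
    using assms unfolding new_kcliques_def sub_ktrees_containing_def sub_ktrees_def by auto
  show edges: "snd S = complete_edges (fst S)" by (rule ktree_card_eq_complete[OF S_ktree card])
  show "finite (fst S)" by (rule ktree_finite[OF S_ktree])
  show "card (fst S) = k" "w \<in> fst S" by (fact card, fact w)
  have "is_kclique k V' E' (fst S)"
    using sub card \<open>finite (fst S)\<close> edges
    unfolding is_kclique_def is_clique_iff_complete_edges_subset by simp
  then show "fst S \<subseteq> insert w Q" by (rule kclique_through_new_subset[OF _ w])
qed

lemma new_kcliques_member_eq:
  assumes S: "S \<in> new_kcliques Ds" and D: "D \<in> Ds"
  shows "S = (D, complete_edges D)"
proof -
  have "is_kclique k (fst S) (snd S) D"
    using S D unfolding new_kcliques_def sub_ktrees_containing_def by auto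
  then have "D = fst S"
    using new_kclique_props[OF S] by (intro card_subset_eq) (auto simp: is_kclique_def)
  then show ?thesis using new_kclique_props(1)[OF S] by (simp add: prod_eq_iff)
qed

lemma card_new_kcliques_le_1:
  assumes "D \<in> Ds" shows "card (new_kcliques Ds) \<le> 1"
proof -
  have "new_kcliques Ds \<subseteq> {(D, complete_edges D)}"
    using new_kcliques_member_eq[OF _ assms] by blast
  then have "card (new_kcliques Ds) \<le> card {(D, complete_edges D)}" by (rule card_mono[rotated]) simp
  then show ?thesis by simp
qed

lemma new_kcliques_empty:
  assumes "D \<in> Ds" "w \<notin> D" shows "new_kcliques Ds = {}"
proof (rule equals0I)
  fix S assume S: "S \<in> new_kcliques Ds"
  have "fst S = D" using new_kcliques_member_eq[OF S assms(1)] by simp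
  then show False using new_kclique_props(4)[OF S] assms(2) by simp
qed

lemma new_kcliques_singleton:
  assumes C: "is_kclique k V' E' C" and w: "w \<in> C"
  shows "new_kcliques {C} = {(C, complete_edges C)}"
proof -
  have C_props: "finite C" "card C = k" "C \<subseteq> V'" "complete_edges C \<subseteq> E'"
    using C unfolding is_kclique_def is_clique_iff_complete_edges_subset by auto
  have "(C, complete_edges C) \<in> sub_ktrees k V' E'"
    using ktree.base[OF C_props(1,2)] C_props(3,4) unfolding sub_ktrees_def by simp
  then have "(C, complete_edges C) \<in> new_kcliques {C}"
    using is_kclique_complete_edges[OF C_props(1,2)] w C_props(2)
    unfolding new_kcliques_def sub_ktrees_containing_def by simp
  then show ?thesis using new_kcliques_member_eq by blast
qed

lemma card_new_kcliques_le: "card (new_kcliques Ds) \<le> k"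
proof (cases k)
  case 0
  have "new_kcliques Ds = {}"
  proof (rule equals0I)
    fix S assume S: "S \<in> new_kcliques Ds"
    then have "fst S = {}" using new_kclique_props(2,3)[OF S] 0 by simp
    then show False using new_kclique_props(4)[OF S] by simp
  qed
  then show ?thesis by simp
next
  case (Suc m)
  let ?drop = "\<lambda>S. fst S - {w}"
  let ?subsets = "{X. X \<subseteq> Q \<and> card X = m}"
  have "inj_on ?drop (new_kcliques Ds)"
  proof
    fix S1 S2 assume S: "S1 \<in> new_kcliques Ds" "S2 \<in> new_kcliques Ds" and "?drop S1 = ?drop S2"
    then have fst_eq: "fst S1 = fst S2"
      using new_kclique_props(4)[OF S(1)] new_kclique_props(4)[OF S(2)] by (metis insert_Diff)
    then show "S1 = S2"
      using new_kclique_props(1)[OF S(1)] new_kclique_props(1)[OF S(2)] by (simp add: prod_eq_iff)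
  qed
  then have "card (new_kcliques Ds) = card (?drop ` new_kcliques Ds)" by (rule card_image[symmetric])
  also have "\<dots> \<le> card ?subsets"
  proof (rule card_mono)
    show "finite ?subsets" using finite_Q by simp
    show "?drop ` new_kcliques Ds \<subseteq> ?subsets"
    proof
      fix X assume "X \<in> ?drop ` new_kcliques Ds"
      then obtain S where S: "S \<in> new_kcliques Ds" and X: "X = fst S - {w}" by blast
      show "X \<in> ?subsets"
        using new_kclique_props[OF S] X Suc by auto
    qed
  qed
  also have "\<dots> = Suc m choose m" using n_subsets[OF finite_Q] card_Q Suc by simp
  finally show ?thesis using Suc by simp
qed

lemma extension_step_avoiding:
  assumes IH: "\<And>Ds C. \<forall>D\<in>Ds. is_kclique k V E D \<Longrightarrow> is_kclique k V E C \<Longrightarrow>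
      N Ds + k \<le> N (insert C Ds) + R (insert C Ds)"
    and Ds: "\<forall>D\<in>Ds. is_kclique k V' E' D" and C: "is_kclique k V' E' C" and w: "w \<notin> C"
  shows "N' Ds + k \<le> N' (insert C Ds) + R' (insert C Ds)"
proof -
  have Ds_C: "\<forall>D\<in>insert C Ds. is_kclique k V' E' D" using Ds C by simp
  have C_old: "is_kclique k V E C" by (rule kclique_avoiding_new[OF C w])
  have trace_C: "trace (insert C Ds) = insert C (trace Ds)" using w unfolding trace_def by auto
  have trace_C_old: "\<forall>D\<in>insert C (trace Ds). is_kclique k V E D"
    using trace_kcliques[OF Ds] C_old by simp
  have "N Ds + card (new_kcliques Ds) \<le>
      N (insert C Ds) + R (insert C Ds) + N (insert C (trace Ds))"
  proof (cases "\<exists>D\<in>Ds. w \<in> D")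
    case True
    then obtain D where "D \<in> Ds" "w \<in> D" by blast
    then have "N Ds = 0" "card (new_kcliques Ds) \<le> 1"
      using sub_ktrees_containing_through_new card_new_kcliques_le_1
      unfolding N_containing_def by simp_all
    moreover have "0 < N (insert C (trace Ds))" by (rule N_containing_pos[OF T trace_C_old])
    ultimately show ?thesis by linarith
  next
    case False
    then have "\<forall>D\<in>Ds. is_kclique k V E D" using Ds kclique_avoiding_new by blast
    then have "N Ds + k \<le> N (insert C Ds) + R (insert C Ds)" by (rule IH[OF _ C_old])
    then show ?thesis using card_new_kcliques_le[of Ds] by linarith
  qed
  moreover have "N (trace Ds) + k \<le> N (insert C (trace Ds)) + R (insert C (trace Ds))"
    by (rule IH[OF trace_kcliques[OF Ds] C_old])
  ultimately show ?thesis
    using N_containing_extension[OF Ds] N_containing_extension[OF Ds_C] R_containing_extension[OF Ds_C]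
    unfolding trace_C by linarith
qed

lemma extension_step_through:
  assumes IH: "\<And>Ds C. \<forall>D\<in>Ds. is_kclique k V E D \<Longrightarrow> is_kclique k V E C \<Longrightarrow>
      N Ds + k \<le> N (insert C Ds) + R (insert C Ds)"
    and Ds: "\<forall>D\<in>Ds. is_kclique k V' E' D" and C: "is_kclique k V' E' C" and w: "w \<in> C"
  shows "N' Ds + k \<le> N' (insert C Ds) + R' (insert C Ds)"
proof -
  have Ds_C: "\<forall>D\<in>insert C Ds. is_kclique k V' E' D" using Ds C by simp
  have "sub_ktrees_containing k V E (insert C Ds) = {}"
    using sub_ktrees_containing_through_new[OF insertI1 w] .
  then have old_C: "N (insert C Ds) = 0" "R (insert C Ds) = 0"
    unfolding N_containing_def R_containing_def by simp_all
  have trace_C: "trace (insert C Ds) = trace Ds" using w unfolding trace_def by auto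
  have "N Ds + card (new_kcliques Ds) + k \<le>
      k * card (new_kcliques (insert C Ds)) + N (trace Ds) + R (trace Ds)"
  proof (cases "\<exists>D\<in>Ds. w \<in> D")
    case True
    then obtain D where "D \<in> Ds" "w \<in> D" by blast
    then have "N Ds = 0" "card (new_kcliques Ds) \<le> 1"
      using sub_ktrees_containing_through_new card_new_kcliques_le_1
      unfolding N_containing_def by simp_all
    moreover have "0 < N (trace Ds)" by (rule N_containing_pos[OF T trace_kcliques[OF Ds]])
    moreover have "k \<le> R (trace Ds)"
      using R_containing_ge[OF T trace_kcliques[OF Ds]] ktree_card_ge[OF T] by linarith
    ultimately show ?thesis by linarith
  next
    case False
    then have trace: "trace Ds = insert Q Ds" unfolding trace_def by auto
    have "\<forall>D\<in>Ds. is_kclique k V E D" using Ds False kclique_avoiding_new by blast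
    then have "N Ds + k \<le> N (trace Ds) + R (trace Ds)" unfolding trace by (rule IH[OF _ Q_clique])
    moreover have "card (new_kcliques Ds) \<le> k * card (new_kcliques (insert C Ds))"
    proof (cases "Ds = {}")
      case True
      then show ?thesis using card_new_kcliques_le new_kcliques_singleton[OF C w] by simp
    next
      case False
      then obtain D where "D \<in> Ds" by blast
      then have "new_kcliques Ds = {}" using new_kcliques_empty \<open>\<not> (\<exists>D\<in>Ds. w \<in> D)\<close> by blast
      then show ?thesis by simp
    qed
    ultimately show ?thesis by linarith
  qed
  then show ?thesis
    using N_containing_extension[OF Ds] N_containing_extension[OF Ds_C] R_containing_extension[OF Ds_C]
    unfolding trace_C old_C by linarith
qed

end

lemma N_containing_add_k_le:
  "ktree k V E \<Longrightarrow> \<forall>D\<in>Ds. is_kclique k V E D \<Longrightarrow> is_kclique k V E C \<Longrightarrow>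
    N_containing k V E Ds + k \<le> N_containing k V E (insert C Ds) + R_containing k V E (insert C Ds)"
proof (induction arbitrary: Ds C rule: ktree.induct)
  case (base V)
  then show ?case
    using sub_ktrees_containing_complete[OF base.hyps]
    unfolding N_containing_def R_containing_def by simp
next
  case (step V E Q w)
  interpret ktree_extension k V E Q w by unfold_locales (fact step.hyps)+
  show ?case
    using extension_step_avoiding[OF step.IH step.prems] extension_step_through[OF step.IH step.prems]
    by blast
qed

lemma N_bar_add_N_containing:
  assumes "ktree k V E"
  shows "N_bar k V E C + N_containing k V E {C} = N_containing k V E {}"
proof -
  let ?avoiding = "{S \<in> sub_ktrees k V E. \<not> is_kclique k (fst S) (snd S) C}"
  have split: "sub_ktrees_containing k V E {} = ?avoiding \<union> sub_ktrees_containing k V E {C}"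
    and disjoint: "?avoiding \<inter> sub_ktrees_containing k V E {C} = {}"
    unfolding sub_ktrees_containing_def by auto
  have "finite ?avoiding" using finite_sub_ktrees[OF assms] by simp
  then show ?thesis
    unfolding N_bar_def N_containing_def split
    using card_Un_disjoint[OF _ finite_sub_ktrees_containing[OF assms] disjoint] by simp
qed

lemma R_sum_eq_R_containing: "R_sum k V E C = R_containing k V E {C}"
  unfolding R_sum_def R_containing_def sub_ktrees_containing_def by simp

theorem lemma5p1:
  fixes k :: nat and V :: "'a set" and E :: "'a set set" and C :: "'a set"
  assumes "k \<ge> 1"
    and "ktree k V E"
    and "is_kclique k V E C"
  shows "R_sum k V E C > N_bar k V E C"
proof -
  have "N_containing k V E {} + k \<le> N_containing k V E {C} + R_containing k V E {C}"
    using N_containing_add_k_le[OF assms(2) _ assms(3), of "{}"] by simp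
  then show ?thesis
    using N_bar_add_N_containing[OF assms(2), of C] R_sum_eq_R_containing[of k V E C] assms(1)
    by linarith
qed

end
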